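(* Let $d\ge 1$ and let $(X_1,\ldots,X_d,Y)$ be a random vector with continuous marginal distribution functions and $(d+1)$-dimensional copula $C$; let $(U_1,\ldots,U_d,V)$ have standard uniform marginals and copula $C$. Fix $\boldsymbol{\alpha}\in[0,1)^d$ with $C(\boldsymbol{\alpha},1)<1$. Then for every $\beta\in(0,1)$, $$\mathrm{VCoVaR}_{\boldsymbol{\alpha},\beta}(Y|\boldsymbol X)=F_Y^{-1}\big(F^{-1}_{V|A_{\boldsymbol U}}(\beta)\big),$$ where $F_{V|A_{\boldsymbol U}}$ is the distribution function of $V$ given $A_{\boldsymbol U}=\{\exists\, i:U_i>\alpha_i\}$.
   Context: $C(\boldsymbol{\alpha},v)=C(\alpha_1,\ldots,\alpha_d,v)$. For a distribution function $F$, $F^{-1}(t)=\inf\{x:F(x)\ge t\}$; $\mathrm{VaR}_t(Z)=F_Z^{-1}(t)$. The vulnerability conditional value-at-risk is $\mathrm{VCoVaR}_{\boldsymbol{\alpha},\beta}(Y|\boldsymbol X)=\mathrm{VaR}_\beta\big(Y\,\big|\,\exists\, i: X_i>\mathrm{VaR}_{\alpha_i}(X_i)\big)$, i.e. the $\beta$-quantile (generalized inverse) of the conditional distribution of $Y$ given the event $\{\exists\, i: X_i>\mathrm{VaR}_{\alpha_i}(X_i)\}$. *)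

theory Defs
  imports "HOL-Probability.Probability"
begin

definition cdf_of :: "'a measure \<Rightarrow> ('a \<Rightarrow> real) \<Rightarrow> real \<Rightarrow> real" where
  "cdf_of M Z x = measure M {\<omega> \<in> space M. Z \<omega> \<le> x}"

text \<open>Generalized inverse F^{-1}(t) = inf {x. F x \<ge> t}, valued in the extended reals
  (so that inf of an unbounded-below set is -\<infinity> and inf of the empty set is +\<infinity>).\<close>
definition gen_inv :: "(real \<Rightarrow> real) \<Rightarrow> real \<Rightarrow> ereal" where
  "gen_inv F t = Inf {ereal x | x. t \<le> F x}"

definition VaR :: "'a measure \<Rightarrow> ('a \<Rightarrow> real) \<Rightarrow> real \<Rightarrow> ereal" where
  "VaR M Z t = gen_inv (cdf_of M Z) t"

definition cond_cdf :: "'a measure \<Rightarrow> 'a set \<Rightarrow> ('a \<Rightarrow> real) \<Rightarrow> real \<Rightarrow> real" where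
  "cond_cdf M A Z y = measure M (A \<inter> {\<omega> \<in> space M. Z \<omega> \<le> y}) / measure M A"

definition exceed_event :: "'a measure \<Rightarrow> nat \<Rightarrow> (nat \<Rightarrow> 'a \<Rightarrow> real) \<Rightarrow> (nat \<Rightarrow> real) \<Rightarrow> 'a set" where
  "exceed_event M d X \<alpha> = {\<omega> \<in> space M. \<exists>i<d. ereal (X i \<omega>) > VaR M (X i) (\<alpha> i)}"

definition VCoVaR :: "'a measure \<Rightarrow> nat \<Rightarrow> (nat \<Rightarrow> 'a \<Rightarrow> real) \<Rightarrow> ('a \<Rightarrow> real)
    \<Rightarrow> (nat \<Rightarrow> real) \<Rightarrow> real \<Rightarrow> ereal" where
  "VCoVaR M d X Y \<alpha> \<beta> = gen_inv (cond_cdf M (exceed_event M d X \<alpha>) Y) \<beta>"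

end

theory Submission
  imports Defs
begin

text \<open>
  For \<open>\<alpha>\<^sub>i > 0\<close> continuity of \<open>F\<^sub>X\<^sub>i\<close> yields a point \<open>q\<^sub>i\<close> with
  \<open>VaR\<^sub>\<alpha>\<^sub>i(X\<^sub>i) = q\<^sub>i\<close> and \<open>F\<^sub>X\<^sub>i(q\<^sub>i) = \<alpha>\<^sub>i\<close>, so by the common copula the event
  that no \<open>X\<^sub>i\<close> exceeds its VaR and \<open>Y \<le> y\<close> has probability \<open>C(\<alpha>, F\<^sub>Y(y))\<close>, like
  the event \<open>U \<le> \<alpha>, V \<le> F\<^sub>Y(y)\<close>; if some \<open>\<alpha>\<^sub>i = 0\<close>, both events are null.
  Passing to complements, \<open>P(A\<^sub>X \<inter> {Y \<le> y}) = P(A\<^sub>U \<inter> {V \<le> F\<^sub>Y(y)})\<close>, and letting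
  \<open>y \<rightarrow> \<infinity>\<close> gives \<open>P(A\<^sub>X) = P(A\<^sub>U)\<close>, which is positive as \<open>C(\<alpha>,1) < 1\<close>. So the
  conditional distribution function of \<open>Y\<close> given \<open>A\<^sub>X\<close> is \<open>H \<circ> F\<^sub>Y\<close>, with \<open>H\<close> that
  of \<open>V\<close> given \<open>A\<^sub>U\<close>. Being a right-continuous distribution function, \<open>H\<close>
  satisfies \<open>\<beta> \<le> H(w) \<longleftrightarrow> H\<^sup>-\<^sup>1(\<beta>) \<le> w\<close>, whence
  \<open>(H \<circ> F\<^sub>Y)\<^sup>-\<^sup>1(\<beta>) = F\<^sub>Y\<^sup>-\<^sup>1(H\<^sup>-\<^sup>1(\<beta>))\<close>.
\<close>

context
  fixes M :: "'a measure" and Z :: "'a \<Rightarrow> real"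
  assumes prob: "prob_space M" and meas: "Z \<in> borel_measurable M"
begin

interpretation cdf_distribution "distr M borel Z"
  using prob meas by (simp add: cdf_distribution_def prob_space.real_distribution_distr)

lemma cdf_of_eq_cdf_distr: "cdf_of M Z = cdf (distr M borel Z)"
proof
  fix x
  have "{\<omega> \<in> space M. Z \<omega> \<le> x} = Z -` {..x} \<inter> space M" by auto
  then show "cdf_of M Z x = cdf (distr M borel Z) x"
    using meas by (simp add: cdf_def measure_distr cdf_of_def)
qed

lemma cdf_of_nonneg: "0 \<le> cdf_of M Z x"
  by (simp add: cdf_of_eq_cdf_distr cdf_nonneg)

lemma cdf_of_le_1: "cdf_of M Z x \<le> 1"
  by (simp add: cdf_of_eq_cdf_distr cdf_bounded_prob)

lemma cdf_of_tendsto_at_top: "(cdf_of M Z \<longlongrightarrow> 1) at_top"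
  by (simp add: cdf_of_eq_cdf_distr cdf_lim_at_top_prob)

lemma cdf_of_threshold:
  assumes "0 < a" "a < 1"
  obtains t where "\<And>x. a \<le> cdf_of M Z x \<longleftrightarrow> t \<le> x"
proof
  show "a \<le> cdf_of M Z x \<longleftrightarrow> I a \<le> x" for x
    unfolding cdf_of_eq_cdf_distr by (rule pseudoinverse[OF assms])
qed

end

lemma gen_inv_eq_threshold:
  assumes "\<And>x. a \<le> F x \<longleftrightarrow> t \<le> x"
  shows "gen_inv F a = ereal t"
  unfolding gen_inv_def
proof (rule antisym)
  show "Inf {ereal x | x. a \<le> F x} \<le> ereal t"
    by (rule Inf_lower) (use assms in auto)
  show "ereal t \<le> Inf {ereal x | x. a \<le> F x}"
    by (rule Inf_greatest) (use assms in auto)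
qed

lemma gen_inv_zero:
  assumes "\<And>x. 0 \<le> F x"
  shows "gen_inv F 0 = -\<infinity>"
proof -
  have "{ereal x | x. 0 \<le> F x} = range ereal"
    using assms by auto (metis ereal_cases)
  then show ?thesis
    unfolding gen_inv_def by (metis ereal_bot Inf_lower rangeI)
qed

lemma gen_inv_comp_threshold:
  assumes "\<And>w. a \<le> H w \<longleftrightarrow> t \<le> w"
  shows "gen_inv (\<lambda>x. H (F x)) a = gen_inv F t"
  unfolding gen_inv_def assms ..

lemma isCont_threshold_value:
  fixes F :: "real \<Rightarrow> real"
  assumes threshold: "\<And>x. a \<le> F x \<longleftrightarrow> t \<le> x" and cont: "isCont F t"
  shows "F t = a"
proof (rule antisym)
  have "(F \<longlongrightarrow> F t) (at_left t)"
    using cont by (simp add: isCont_def filterlim_at_split)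
  moreover have "F x \<le> a" if "x < t" for x
    using threshold[of x] that by linarith
  then have "eventually (\<lambda>x. F x \<le> a) (at_left t)"
    by (auto simp: eventually_at_left_field intro!: exI[of _ "t - 1"])
  ultimately show "F t \<le> a"
    by (rule tendsto_upperbound) simp
qed (use threshold in simp)

lemma (in prob_space) prob_le_prob_inter_add:
  assumes "A \<in> events" "B \<in> events"
  shows "prob A \<le> prob (A \<inter> B) + (1 - prob B)"
proof -
  have "prob A \<le> prob ((A \<inter> B) \<union> (space M - B))"
    using assms sets.sets_into_space by (intro finite_measure_mono) auto
  also have "\<dots> \<le> prob (A \<inter> B) + prob (space M - B)"
    using assms by (intro measure_Un_le) auto
  finally show ?thesis
    using assms prob_compl by simp
qed

lemma (in prob_space) prob_inter_full:
  assumes "A \<in> events" "B \<in> events" "prob B = 1"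
  shows "prob (A \<inter> B) = prob A"
  using prob_le_prob_inter_add[OF assms(1,2)] finite_measure_mono[of "A \<inter> B" A] assms by simp

lemma (in prob_space) prob_inter_tendsto:
  assumes "A \<in> events" "\<And>x. B x \<in> events" "((\<lambda>x. prob (B x)) \<longlongrightarrow> 1) F"
  shows "((\<lambda>x. prob (A \<inter> B x)) \<longlongrightarrow> prob A) F"
proof (rule tendsto_sandwich)
  show "eventually (\<lambda>x. prob A - (1 - prob (B x)) \<le> prob (A \<inter> B x)) F"
    using prob_le_prob_inter_add[OF assms(1,2)] by (auto intro!: always_eventually simp: algebra_simps)
  show "eventually (\<lambda>x. prob (A \<inter> B x) \<le> prob A) F"
    using assms(1) by (auto intro!: always_eventually finite_measure_mono)
  show "((\<lambda>x. prob A - (1 - prob (B x))) \<longlongrightarrow> prob A) F"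
    using tendsto_diff[OF tendsto_const[of "prob A"] tendsto_diff[OF tendsto_const[of 1] assms(3)]]
    by simp
qed simp

lemma cond_cdf_eq_comp:
  assumes M: "prob_space M" and N: "prob_space N"
    and A: "A \<in> sets M" and A': "A' \<in> sets N"
    and Y: "Y \<in> borel_measurable M" and V: "V \<in> borel_measurable N"
    and marginal: "\<And>y. cdf_of N V (G y) = cdf_of M Y y"
    and joint: "\<And>y. measure M (A \<inter> {\<omega> \<in> space M. Y \<omega> \<le> y})
                    = measure N (A' \<inter> {\<omega> \<in> space N. V \<omega> \<le> G y})"
  shows "cond_cdf M A Y y = cond_cdf N A' V (G y)"
proof -
  interpret PM: prob_space M by (rule M)
  interpret PN: prob_space N by (rule N)
  have FY: "((\<lambda>y. cdf_of M Y y) \<longlongrightarrow> 1) at_top"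
    using cdf_of_tendsto_at_top[OF M Y] by simp
  with marginal have "((\<lambda>y. cdf_of N V (G y)) \<longlongrightarrow> 1) at_top"
    by simp
  with FY have "((\<lambda>y. measure M {\<omega> \<in> space M. Y \<omega> \<le> y}) \<longlongrightarrow> 1) at_top"
    and "((\<lambda>y. measure N {\<omega> \<in> space N. V \<omega> \<le> G y}) \<longlongrightarrow> 1) at_top"
    unfolding cdf_of_def .
  then have "((\<lambda>y. measure M (A \<inter> {\<omega> \<in> space M. Y \<omega> \<le> y})) \<longlongrightarrow> measure M A) at_top"
    and "((\<lambda>y. measure N (A' \<inter> {\<omega> \<in> space N. V \<omega> \<le> G y})) \<longlongrightarrow> measure N A') at_top"
    using A A' Y V by (auto intro!: PM.prob_inter_tendsto PN.prob_inter_tendsto)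
  then have "measure M A = measure N A'"
    unfolding joint by (rule tendsto_unique[OF trivial_limit_at_top_linorder])
  then show ?thesis
    unfolding cond_cdf_def joint by simp
qed

lemma gen_inv_cond_cdf_threshold:
  assumes N: "prob_space N" and A: "A \<in> sets N" "0 < measure N A"
    and V: "V \<in> borel_measurable N" and \<beta>: "0 < \<beta>" "\<beta> < 1"
  obtains t where "gen_inv (cond_cdf N A V) \<beta> = ereal t"
    and "\<And>w. \<beta> \<le> cond_cdf N A V w \<longleftrightarrow> t \<le> w"
proof -
  interpret prob_space N by (rule N)
  have nonzero: "emeasure N A \<noteq> 0" "emeasure N A \<noteq> \<infinity>"
    using A by (auto simp: emeasure_eq_measure)
  have "cond_cdf N A V = cdf_of (uniform_measure N A) V"
    using V nonzero by (auto simp: cond_cdf_def cdf_of_def Int_def)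
  moreover have "V \<in> borel_measurable (uniform_measure N A)"
    using V by simp
  then obtain t where "\<And>w. \<beta> \<le> cdf_of (uniform_measure N A) V w \<longleftrightarrow> t \<le> w"
    using cdf_of_threshold[OF prob_space_uniform_measure[OF nonzero]] \<beta> by metis
  ultimately show ?thesis
    using that gen_inv_eq_threshold by metis
qed

lemma sets_exceed_event:
  assumes "\<And>i. i < d \<Longrightarrow> X i \<in> borel_measurable M"
  shows "exceed_event M d X \<alpha> \<in> sets M"
proof -
  have "{\<omega> \<in> space M. \<exists>i\<in>{..<d}. VaR M (X i) (\<alpha> i) < ereal (X i \<omega>)} \<in> sets M"
  proof (intro sets.sets_Collect_finite_Ex ballI)
    fix i assume "i \<in> {..<d}"
    then have "X i \<in> borel_measurable M"
      using assms by simp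
    then show "{\<omega> \<in> space M. VaR M (X i) (\<alpha> i) < ereal (X i \<omega>)} \<in> sets M"
      by measurable
  qed simp
  then show ?thesis
    unfolding exceed_event_def by (simp only: Bex_def lessThan_iff)
qed

lemma sets_Collect_exists_greater:
  fixes U :: "nat \<Rightarrow> 'a \<Rightarrow> real"
  assumes "\<And>i. i < d \<Longrightarrow> U i \<in> borel_measurable N"
  shows "{\<omega> \<in> space N. \<exists>i<d. \<alpha> i < U i \<omega>} \<in> sets N"
proof -
  have "{\<omega> \<in> space N. \<exists>i\<in>{..<d}. \<alpha> i < U i \<omega>} \<in> sets N"
  proof (intro sets.sets_Collect_finite_Ex ballI)
    fix i assume "i \<in> {..<d}"
    then have "U i \<in> borel_measurable N"
      using assms by simp
    then show "{\<omega> \<in> space N. \<alpha> i < U i \<omega>} \<in> sets N"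
      by measurable
  qed simp
  then show ?thesis
    by (simp only: Bex_def lessThan_iff)
qed

locale common_copula = PM: prob_space M + PN: prob_space N
  for M :: "'a measure" and N :: "'b measure" +
  fixes d :: nat
    and X :: "nat \<Rightarrow> 'a \<Rightarrow> real" and Y :: "'a \<Rightarrow> real"
    and U :: "nat \<Rightarrow> 'b \<Rightarrow> real" and V :: "'b \<Rightarrow> real"
    and C :: "(nat \<Rightarrow> real) \<Rightarrow> real \<Rightarrow> real"
    and \<alpha> :: "nat \<Rightarrow> real"
  assumes Xmeas: "\<And>i. i < d \<Longrightarrow> X i \<in> borel_measurable M"
    and Ymeas: "Y \<in> borel_measurable M"
    and Xcont: "\<And>i. i < d \<Longrightarrow> continuous_on UNIV (cdf_of M (X i))"
    and copXY: "\<And>x y. measure M {\<omega> \<in> space M. (\<forall>i<d. X i \<omega> \<le> x i) \<and> Y \<omega> \<le> y}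
                 = C (\<lambda>i. cdf_of M (X i) (x i)) (cdf_of M Y y)"
    and Umeas: "\<And>i. i < d \<Longrightarrow> U i \<in> borel_measurable N"
    and Vmeas: "V \<in> borel_measurable N"
    and Uunif: "\<And>i t. i < d \<Longrightarrow> t \<in> {0..1} \<Longrightarrow> cdf_of N (U i) t = t"
    and Vunif: "\<And>t. t \<in> {0..1} \<Longrightarrow> cdf_of N V t = t"
    and copUV: "\<And>u v. (\<forall>i<d. u i \<in> {0..1}) \<Longrightarrow> v \<in> {0..1} \<Longrightarrow>
                 measure N {\<omega> \<in> space N. (\<forall>i<d. U i \<omega> \<le> u i) \<and> V \<omega> \<le> v} = C u v"
    and alpha: "\<And>i. i < d \<Longrightarrow> \<alpha> i \<in> {0..<1}"
begin

lemma lower_orthant_measure: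
  "measure M {\<omega> \<in> space M. (\<forall>i<d. ereal (X i \<omega>) \<le> VaR M (X i) (\<alpha> i)) \<and> Y \<omega> \<le> y}
   = measure N {\<omega> \<in> space N. (\<forall>i<d. U i \<omega> \<le> \<alpha> i) \<and> V \<omega> \<le> cdf_of M Y y}"
proof (cases "\<exists>i<d. \<alpha> i = 0")
  case True
  then obtain j where j: "j < d" "\<alpha> j = 0"
    by auto
  have "VaR M (X j) (\<alpha> j) = -\<infinity>"
    unfolding VaR_def j(2) using cdf_of_nonneg[OF PM.prob_space_axioms Xmeas[OF j(1)]]
    by (rule gen_inv_zero)
  then have empty: "{\<omega> \<in> space M. (\<forall>i<d. ereal (X i \<omega>) \<le> VaR M (X i) (\<alpha> i)) \<and> Y \<omega> \<le> y} = {}"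
    using j(1) by force
  have "measure N {\<omega> \<in> space N. (\<forall>i<d. U i \<omega> \<le> \<alpha> i) \<and> V \<omega> \<le> cdf_of M Y y}
      \<le> measure N {\<omega> \<in> space N. U j \<omega> \<le> 0}"
    using j Umeas[OF j(1)] by (intro PN.finite_measure_mono) auto
  moreover have "measure N {\<omega> \<in> space N. U j \<omega> \<le> 0} = 0"
    using Uunif[OF j(1), of 0] by (simp add: cdf_of_def)
  ultimately show ?thesis
    unfolding empty by (simp add: measure_le_0_iff)
next
  case False
  then have "0 < \<alpha> i" "\<alpha> i < 1" if "i < d" for i
    using alpha[OF that] that by force+
  then have "\<forall>i. \<exists>q. i < d \<longrightarrow> (\<forall>x. \<alpha> i \<le> cdf_of M (X i) x \<longleftrightarrow> q \<le> x)"
    using cdf_of_threshold[OF PM.prob_space_axioms Xmeas] by metis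
  then obtain q where q: "\<And>i x. i < d \<Longrightarrow> \<alpha> i \<le> cdf_of M (X i) x \<longleftrightarrow> q i \<le> x"
    by metis
  have VaR: "VaR M (X i) (\<alpha> i) = ereal (q i)" if "i < d" for i
    unfolding VaR_def using q[OF that] by (rule gen_inv_eq_threshold)
  have Fq: "cdf_of M (X i) (q i) = \<alpha> i" if "i < d" for i
    using q[OF that] Xcont[OF that]
    by (simp add: isCont_threshold_value continuous_on_eq_continuous_at)
  have "measure M {\<omega> \<in> space M. (\<forall>i<d. ereal (X i \<omega>) \<le> VaR M (X i) (\<alpha> i)) \<and> Y \<omega> \<le> y}
      = measure M {\<omega> \<in> space M. (\<forall>i<d. X i \<omega> \<le> q i) \<and> Y \<omega> \<le> y}"
    using VaR by simp
  also have "\<dots> = C (\<lambda>i. cdf_of M (X i) (q i)) (cdf_of M Y y)"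
    by (rule copXY)
  also have "\<dots> = measure N {\<omega> \<in> space N. (\<forall>i<d. U i \<omega> \<le> cdf_of M (X i) (q i)) \<and> V \<omega> \<le> cdf_of M Y y}"
    using Fq alpha cdf_of_nonneg[OF PM.prob_space_axioms Ymeas] cdf_of_le_1[OF PM.prob_space_axioms Ymeas]
    by (intro copUV[symmetric]) (auto intro: less_imp_le)
  also have "\<dots> = measure N {\<omega> \<in> space N. (\<forall>i<d. U i \<omega> \<le> \<alpha> i) \<and> V \<omega> \<le> cdf_of M Y y}"
    using Fq by simp
  finally show ?thesis .
qed

lemma exceed_event_joint_measure:
  "measure M (exceed_event M d X \<alpha> \<inter> {\<omega> \<in> space M. Y \<omega> \<le> y})
   = measure N ({\<omega> \<in> space N. \<exists>i<d. \<alpha> i < U i \<omega>} \<inter> {\<omega> \<in> space N. V \<omega> \<le> cdf_of M Y y})"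
proof -
  let ?AX = "exceed_event M d X \<alpha>" and ?AU = "{\<omega> \<in> space N. \<exists>i<d. \<alpha> i < U i \<omega>}"
  let ?YL = "{\<omega> \<in> space M. Y \<omega> \<le> y}" and ?VL = "{\<omega> \<in> space N. V \<omega> \<le> cdf_of M Y y}"
  have LX: "{\<omega> \<in> space M. (\<forall>i<d. ereal (X i \<omega>) \<le> VaR M (X i) (\<alpha> i)) \<and> Y \<omega> \<le> y}
      = ?YL - ?AX"
    by (auto simp: exceed_event_def not_less)
  have LU: "{\<omega> \<in> space N. (\<forall>i<d. U i \<omega> \<le> \<alpha> i) \<and> V \<omega> \<le> cdf_of M Y y} = ?VL - ?AU"
    by (auto simp: not_less)
  have AX: "?AX \<in> sets M"
    using Xmeas by (rule sets_exceed_event)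
  have AU: "?AU \<in> sets N"
    using Umeas by (rule sets_Collect_exists_greater)
  have YL: "?YL \<in> sets M" and VL: "?VL \<in> sets N"
    using Ymeas Vmeas by measurable
  have "measure M (?YL - ?AX) = measure N (?VL - ?AU)"
    using lower_orthant_measure[of y] unfolding LX LU .
  moreover have "measure M (?YL - ?AX) = measure M ?YL - measure M (?AX \<inter> ?YL)"
    using PM.finite_measure_Diff'[OF YL AX] Int_commute[of ?AX ?YL] by simp
  moreover have "measure N (?VL - ?AU) = measure N ?VL - measure N (?AU \<inter> ?VL)"
    using PN.finite_measure_Diff'[OF VL AU] Int_commute[of ?AU ?VL] by simp
  moreover have "measure N ?VL = measure M ?YL"
    using Vunif cdf_of_nonneg[OF PM.prob_space_axioms Ymeas] cdf_of_le_1[OF PM.prob_space_axioms Ymeas]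
    by (simp add: cdf_of_def)
  ultimately show ?thesis
    by linarith
qed

lemma exceedance_prob_pos:
  assumes "C \<alpha> 1 < 1"
  shows "0 < measure N {\<omega> \<in> space N. \<exists>i<d. \<alpha> i < U i \<omega>}"
proof -
  let ?AU = "{\<omega> \<in> space N. \<exists>i<d. \<alpha> i < U i \<omega>}" and ?V1 = "{\<omega> \<in> space N. V \<omega> \<le> 1}"
  have AU: "?AU \<in> sets N"
    using Umeas by (rule sets_Collect_exists_greater)
  have "(space N - ?AU) \<inter> ?V1 = {\<omega> \<in> space N. (\<forall>i<d. U i \<omega> \<le> \<alpha> i) \<and> V \<omega> \<le> 1}"
    by (auto simp: not_less)
  then have "measure N ((space N - ?AU) \<inter> ?V1) = C \<alpha> 1"
    using alpha by (auto intro!: copUV less_imp_le)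
  moreover have "measure N ((space N - ?AU) \<inter> ?V1) = measure N (space N - ?AU)"
  proof (rule PN.prob_inter_full)
    show "space N - ?AU \<in> sets N"
      using AU by blast
    show "?V1 \<in> sets N"
      using Vmeas by measurable
    show "measure N ?V1 = 1"
      using Vunif[of 1] by (simp add: cdf_of_def)
  qed
  ultimately show ?thesis
    using PN.prob_compl[OF AU] assms by simp
qed

end

theorem corollary3p3:
  fixes M :: "'a measure" and N :: "'b measure"
    and d :: nat
    and X :: "nat \<Rightarrow> 'a \<Rightarrow> real" and Y :: "'a \<Rightarrow> real"
    and U :: "nat \<Rightarrow> 'b \<Rightarrow> real" and V :: "'b \<Rightarrow> real"
    and C :: "(nat \<Rightarrow> real) \<Rightarrow> real \<Rightarrow> real"
    and \<alpha> :: "nat \<Rightarrow> real" and \<beta> :: real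
  assumes d: "d \<ge> 1"
    and M: "prob_space M" and N: "prob_space N"
    and Xmeas: "\<And>i. i < d \<Longrightarrow> X i \<in> borel_measurable M"
    and Ymeas: "Y \<in> borel_measurable M"
    and Xcont: "\<And>i. i < d \<Longrightarrow> continuous_on UNIV (cdf_of M (X i))"
    and Ycont: "continuous_on UNIV (cdf_of M Y)"
    and copXY: "\<And>x y. measure M {\<omega> \<in> space M. (\<forall>i<d. X i \<omega> \<le> x i) \<and> Y \<omega> \<le> y}
                 = C (\<lambda>i. cdf_of M (X i) (x i)) (cdf_of M Y y)"
    and Umeas: "\<And>i. i < d \<Longrightarrow> U i \<in> borel_measurable N"
    and Vmeas: "V \<in> borel_measurable N"
    and Uunif: "\<And>i t. i < d \<Longrightarrow> t \<in> {0..1} \<Longrightarrow> cdf_of N (U i) t = t"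
    and Vunif: "\<And>t. t \<in> {0..1} \<Longrightarrow> cdf_of N V t = t"
    and copUV: "\<And>u v. (\<forall>i<d. u i \<in> {0..1}) \<Longrightarrow> v \<in> {0..1} \<Longrightarrow>
                 measure N {\<omega> \<in> space N. (\<forall>i<d. U i \<omega> \<le> u i) \<and> V \<omega> \<le> v} = C u v"
    and alpha: "\<And>i. i < d \<Longrightarrow> \<alpha> i \<in> {0..<1}"
    and Calpha: "C \<alpha> 1 < 1"
    and beta: "\<beta> \<in> {0<..<1}"
  shows "VCoVaR M d X Y \<alpha> \<beta> =
           gen_inv (cdf_of M Y)
             (real_of_ereal (gen_inv (cond_cdf N {\<omega> \<in> space N. \<exists>i<d. U i \<omega> > \<alpha> i} V) \<beta>))"
proof -
  interpret common_copula M N d X Y U V C \<alpha>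
    using M N Xmeas Ymeas Xcont copXY Umeas Vmeas Uunif Vunif copUV alpha
    by (simp add: common_copula_def common_copula_axioms_def)
  let ?AU = "{\<omega> \<in> space N. \<exists>i<d. U i \<omega> > \<alpha> i}"
  have AU: "?AU \<in> sets N"
    using Umeas by (rule sets_Collect_exists_greater)
  obtain t where t: "gen_inv (cond_cdf N ?AU V) \<beta> = ereal t"
    and threshold: "\<And>w. \<beta> \<le> cond_cdf N ?AU V w \<longleftrightarrow> t \<le> w"
    using gen_inv_cond_cdf_threshold[OF N AU exceedance_prob_pos[OF Calpha] Vmeas] beta by auto
  have AX: "exceed_event M d X \<alpha> \<in> sets M"
    using Xmeas by (rule sets_exceed_event)
  have "cond_cdf M (exceed_event M d X \<alpha>) Y = (\<lambda>y. cond_cdf N ?AU V (cdf_of M Y y))"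
    using Vunif cdf_of_nonneg[OF M Ymeas] cdf_of_le_1[OF M Ymeas] exceed_event_joint_measure
    by (intro ext cond_cdf_eq_comp[OF M N AX AU Ymeas Vmeas]) auto
  then have "VCoVaR M d X Y \<alpha> \<beta> = gen_inv (\<lambda>y. cond_cdf N ?AU V (cdf_of M Y y)) \<beta>"
    unfolding VCoVaR_def by simp
  also have "\<dots> = gen_inv (cdf_of M Y) t"
    using threshold by (rule gen_inv_comp_threshold)
  finally show ?thesis
    using t by simp
qed

end
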